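(* Assume the Setup (for a single $n$) and the Spectral notation, and let $\epsilon,\delta>0$ be arbitrary. Then \[|U_{\epsilon,\delta}|\le \frac{m\,k(k+1)}{d^2\epsilon\delta}.\]
   Context: Setup. $k\ge 1$ is an integer and $d$ a positive integer. $G=(V,U,E)$ is a finite simple bipartite graph with parts $V$, $|V|=n$, and $U$, $|U|=m$, which is $C_4$-free (any two distinct vertices have at most one common neighbour) and $(d,k+1)$-bi-regular (every $v\in V$ has degree $d$ and every $u\in U$ has degree $k+1$). $B$ is a signed adjacency matrix of $G$: the real $V\times U$ matrix with $B_{v,u}\in\{1,-1\}$ if $vu\in E$ and $B_{v,u}=0$ otherwise. Spectral notation. $L^-=\frac1d B^TB$ (a $U\times U$ positive semidefinite matrix); $\lambda_1,\dots,\lambda_{\operatorname{rank}B}$ are its positive eigenvalues (with multiplicity) and $\psi_1,\dots,\psi_{\operatorname{rank}B}\in\mathbb R^U$ a corresponding orthonormal family of eigenvectors. A vertex $u\in U$ is $(\epsilon,\delta)$-structured if $\sum_{i:(\lambda_i-1)^2>\epsilon}\psi_i(u)^2>\delta$, and $U_{\epsilon,\delta}$ is the set of such vertices. *)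

theory Defs
  imports "Jordan_Normal_Form.Matrix" "Jordan_Normal_Form.DL_Rank"
begin

definition C4free_bireg :: "nat \<Rightarrow> nat \<Rightarrow> (nat \<times> nat) set \<Rightarrow> nat \<Rightarrow> nat \<Rightarrow> bool" where
  "C4free_bireg n m E d k \<longleftrightarrow>
     E \<subseteq> {0..<n} \<times> {0..<m}
   \<and> (\<forall>v<n. card {u. u < m \<and> (v,u) \<in> E} = d)
   \<and> (\<forall>u<m. card {v. v < n \<and> (v,u) \<in> E} = k + 1)
   \<and> (\<forall>v<n. \<forall>v'<n. v \<noteq> v' \<longrightarrow> card {u. u < m \<and> (v,u) \<in> E \<and> (v',u) \<in> E} \<le> 1)
   \<and> (\<forall>u<m. \<forall>u'<m. u \<noteq> u' \<longrightarrow> card {v. v < n \<and> (v,u) \<in> E \<and> (v,u') \<in> E} \<le> 1)"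

definition signed_adj :: "nat \<Rightarrow> nat \<Rightarrow> (nat \<times> nat) set \<Rightarrow> real mat \<Rightarrow> bool" where
  "signed_adj n m E B \<longleftrightarrow> B \<in> carrier_mat n m
   \<and> (\<forall>v<n. \<forall>u<m. (if (v,u) \<in> E then B $$ (v,u) \<in> {1, -1} else B $$ (v,u) = 0))"

definition Lminus :: "nat \<Rightarrow> real mat \<Rightarrow> real mat" where
  "Lminus d B = (1 / real d) \<cdot>\<^sub>m (transpose_mat B * B)"

text \<open>\<open>lam\<close>, \<open>psi\<close> (indices 0..<r, r = rank B): positive eigenvalues of L^- with multiplicity
  and an orthonormal family of corresponding eigenvectors.\<close>
definition pos_eigen_system :: "nat \<Rightarrow> nat \<Rightarrow> real mat \<Rightarrow> nat \<Rightarrow> (nat \<Rightarrow> real) \<Rightarrow> (nat \<Rightarrow> real vec) \<Rightarrow> bool" where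
  "pos_eigen_system m d B r lam psi \<longleftrightarrow>
     (\<forall>i<r. psi i \<in> carrier_vec m \<and> lam i > 0 \<and> Lminus d B *\<^sub>v psi i = lam i \<cdot>\<^sub>v psi i)
   \<and> (\<forall>i<r. \<forall>j<r. psi i \<bullet> psi j = (if i = j then 1 else 0))"

definition structured_set :: "nat \<Rightarrow> nat \<Rightarrow> (nat \<Rightarrow> real) \<Rightarrow> (nat \<Rightarrow> real vec) \<Rightarrow> real \<Rightarrow> real \<Rightarrow> nat set" where
  "structured_set m r lam psi \<epsilon> \<delta> =
     {u. u < m \<and> (\<Sum>i\<in>{i. i < r \<and> (lam i - 1)^2 > \<epsilon>}. (psi i $ u)^2) > \<delta>}"

end

theory Submission
  imports Defs
begin

(* The positive eigenvalues lam_i of L^- = B^T B / d are also eigenvalues of L^+ = B B^T / d, with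
   the orthonormal eigenvectors B psi_i / sqrt (d lam_i).  Applying Bessel's inequality to the rows
   of L^+ - 1 bounds the sum of the (lam_i - 1)^2 by the squared Frobenius norm of L^+ - 1.  That
   matrix has zero diagonal because every v has degree d; by C4-freeness its off-diagonal entries
   have absolute value at most 1/d, and they vanish unless v and v' have a common neighbour, which
   happens for exactly d k vertices v'.  So the squared norm is at most n k / d = m k (k+1) / d^2.
   Hence at most this bound over eps of the lam_i satisfy (lam_i - 1)^2 > eps, and since each psi_i
   is a unit vector, at most that many over delta coordinates u can carry weight more than delta. *)

lemma smult_mat_mult_mat_vec:
  fixes A :: "'a :: comm_semiring_0 mat"
  assumes "dim_vec v = dim_col A"
  shows "(k \<cdot>\<^sub>m A) *\<^sub>v v = k \<cdot>\<^sub>v (A *\<^sub>v v)"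
  using assms by (intro eq_vecI) auto

lemma scalar_prod_lincomb:
  fixes \<phi> :: "'i \<Rightarrow> 'a :: comm_semiring_0 vec"
  assumes "finite I" "g \<in> carrier_vec N" "\<And>i. i \<in> I \<Longrightarrow> \<phi> i \<in> carrier_vec N"
  shows "vec N (\<lambda>x. \<Sum>i\<in>I. a i * \<phi> i $ x) \<bullet> g = (\<Sum>i\<in>I. a i * (\<phi> i \<bullet> g))"
proof -
  have "vec N (\<lambda>x. \<Sum>i\<in>I. a i * \<phi> i $ x) \<bullet> g = (\<Sum>x<N. \<Sum>i\<in>I. a i * (\<phi> i $ x * g $ x))"
    using assms(2) by (simp add: scalar_prod_def sum_distrib_right mult.assoc lessThan_atLeast0)
  also have "\<dots> = (\<Sum>i\<in>I. a i * (\<phi> i \<bullet> g))"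
    using assms(2,3) by (subst sum.swap) (simp add: scalar_prod_def sum_distrib_left lessThan_atLeast0)
  finally show ?thesis .
qed

lemma bessel_inequality:
  fixes f :: "real vec" and \<phi> :: "'i \<Rightarrow> real vec"
  assumes "finite I" and f: "f \<in> carrier_vec N" and \<phi>: "\<And>i. i \<in> I \<Longrightarrow> \<phi> i \<in> carrier_vec N"
    and orth: "\<And>i j. i \<in> I \<Longrightarrow> j \<in> I \<Longrightarrow> \<phi> i \<bullet> \<phi> j = (if i = j then 1 else 0)"
  shows "(\<Sum>i\<in>I. (f \<bullet> \<phi> i)\<^sup>2) \<le> f \<bullet> f"
proof -
  define c where "c i = \<phi> i \<bullet> f" for i
  define s where "s = vec N (\<lambda>x. \<Sum>i\<in>I. c i * \<phi> i $ x)"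
  have s: "s \<in> carrier_vec N" unfolding s_def by simp
  have c_sq: "(\<Sum>i\<in>I. (f \<bullet> \<phi> i)\<^sup>2) = (\<Sum>i\<in>I. c i * c i)"
    using f \<phi> by (simp add: c_def power2_eq_square comm_scalar_prod[of f N])
  have sf: "s \<bullet> f = (\<Sum>i\<in>I. c i * c i)"
    unfolding s_def using scalar_prod_lincomb[OF assms(1) f \<phi>] by (simp add: c_def)
  have "s \<bullet> s = (\<Sum>i\<in>I. c i * (\<phi> i \<bullet> s))"
    unfolding s_def using scalar_prod_lincomb[OF assms(1) s \<phi>] by (simp add: s_def)
  also have "\<dots> = (\<Sum>i\<in>I. c i * (\<Sum>j\<in>I. c j * (\<phi> j \<bullet> \<phi> i)))"
    using scalar_prod_lincomb[OF assms(1) \<phi> \<phi>] \<phi> s by (simp add: comm_scalar_prod[of _ N] s_def)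
  also have "\<dots> = (\<Sum>i\<in>I. c i * c i)"
  proof (rule sum.cong)
    fix i assume "i \<in> I"
    then have "(\<Sum>j\<in>I. c j * (\<phi> j \<bullet> \<phi> i)) = (\<Sum>j\<in>I. if j = i then c j else 0)"
      by (intro sum.cong) (simp_all add: orth)
    then show "c i * (\<Sum>j\<in>I. c j * (\<phi> j \<bullet> \<phi> i)) = c i * c i"
      using \<open>i \<in> I\<close> assms(1) by simp
  qed simp
  finally have ss: "s \<bullet> s = (\<Sum>i\<in>I. c i * c i)" .
  have "0 \<le> (f - s) \<bullet> (f - s)" by (simp add: scalar_prod_def sum_nonneg)
  also have "\<dots> = f \<bullet> f - 2 * (s \<bullet> f) + s \<bullet> s"
    using f s by (simp add: minus_scalar_prod_distrib[of _ N] scalar_prod_minus_distrib[of _ N]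
        comm_scalar_prod[OF f s])
  finally show ?thesis using c_sq sf ss by linarith
qed

lemma sum_sq_eigenvalues_le_frobenius:
  fixes M :: "real mat" and \<phi> :: "'i \<Rightarrow> real vec"
  assumes M: "M \<in> carrier_mat N N" and I: "finite I"
    and \<phi>: "\<And>i. i \<in> I \<Longrightarrow> \<phi> i \<in> carrier_vec N"
    and orth: "\<And>i j. i \<in> I \<Longrightarrow> j \<in> I \<Longrightarrow> \<phi> i \<bullet> \<phi> j = (if i = j then 1 else 0)"
    and eig: "\<And>i. i \<in> I \<Longrightarrow> M *\<^sub>v \<phi> i = \<alpha> i \<cdot>\<^sub>v \<phi> i"
  shows "(\<Sum>i\<in>I. (\<alpha> i)\<^sup>2) \<le> (\<Sum>v<N. \<Sum>v'<N. (M $$ (v, v'))\<^sup>2)"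
proof -
  have "(\<alpha> i)\<^sup>2 = (M *\<^sub>v \<phi> i) \<bullet> (M *\<^sub>v \<phi> i)" if "i \<in> I" for i
    using that \<phi>[OF that] orth[OF that that] by (simp add: eig power2_eq_square)
  also have "(M *\<^sub>v \<phi> i) \<bullet> (M *\<^sub>v \<phi> i) = (\<Sum>v<N. (row M v \<bullet> \<phi> i)\<^sup>2)" for i
    using M by (simp add: scalar_prod_def power2_eq_square lessThan_atLeast0)
  finally have "(\<Sum>i\<in>I. (\<alpha> i)\<^sup>2) = (\<Sum>v<N. \<Sum>i\<in>I. (row M v \<bullet> \<phi> i)\<^sup>2)"
    by (simp add: sum.swap[of _ _ I])
  also have "\<dots> \<le> (\<Sum>v<N. row M v \<bullet> row M v)"
    using M by (intro sum_mono bessel_inequality[OF I _ \<phi> orth]) auto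
  also have "\<dots> = (\<Sum>v<N. \<Sum>v'<N. (M $$ (v, v'))\<^sup>2)"
    using M by (simp add: scalar_prod_def power2_eq_square lessThan_atLeast0)
  finally show ?thesis .
qed

lemma mult_mat_vec_scalar_prod:
  fixes A :: "'a :: comm_semiring_0 mat"
  assumes "A \<in> carrier_mat n m" "x \<in> carrier_vec m" "y \<in> carrier_vec m"
  shows "(A *\<^sub>v x) \<bullet> (A *\<^sub>v y) = x \<bullet> ((transpose_mat A * A) *\<^sub>v y)"
  using assms transpose_vec_mult_scalar[of A n m x "A *\<^sub>v y"]
  by (simp add: comm_scalar_prod[of x m] comm_scalar_prod[of "A *\<^sub>v x" n])

lemma eigenvector_mult_transpose:
  fixes A :: "'a :: field mat"
  assumes A: "A \<in> carrier_mat n m" and x: "x \<in> carrier_vec m"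
    and eig: "(transpose_mat A * A) *\<^sub>v x = \<mu> \<cdot>\<^sub>v x"
  shows "(A * transpose_mat A) *\<^sub>v (A *\<^sub>v x) = \<mu> \<cdot>\<^sub>v (A *\<^sub>v x)"
proof -
  have "(A * transpose_mat A) *\<^sub>v (A *\<^sub>v x) = A *\<^sub>v ((transpose_mat A * A) *\<^sub>v x)"
    using A x by simp
  then show ?thesis using A x by (simp add: eig mult_mat_vec)
qed

lemma orthonormal_eigenvectors_mult_transpose:
  fixes A :: "real mat" and \<psi> :: "'i \<Rightarrow> real vec"
  assumes A: "A \<in> carrier_mat n m"
    and \<psi>: "\<And>i. i \<in> I \<Longrightarrow> \<psi> i \<in> carrier_vec m"
    and orth: "\<And>i j. i \<in> I \<Longrightarrow> j \<in> I \<Longrightarrow> \<psi> i \<bullet> \<psi> j = (if i = j then 1 else 0)"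
    and eig: "\<And>i. i \<in> I \<Longrightarrow> (transpose_mat A * A) *\<^sub>v \<psi> i = \<mu> i \<cdot>\<^sub>v \<psi> i"
    and pos: "\<And>i. i \<in> I \<Longrightarrow> \<mu> i > 0"
  defines "\<phi> \<equiv> \<lambda>i. (1 / sqrt (\<mu> i)) \<cdot>\<^sub>v (A *\<^sub>v \<psi> i)"
  shows "\<And>i. i \<in> I \<Longrightarrow> \<phi> i \<in> carrier_vec n"
    and "\<And>i. i \<in> I \<Longrightarrow> (A * transpose_mat A) *\<^sub>v \<phi> i = \<mu> i \<cdot>\<^sub>v \<phi> i"
    and "\<And>i j. i \<in> I \<Longrightarrow> j \<in> I \<Longrightarrow> \<phi> i \<bullet> \<phi> j = (if i = j then 1 else 0)"
proof -
  fix i j assume i: "i \<in> I" and j: "j \<in> I"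
  show "\<phi> i \<in> carrier_vec n" using A \<psi>[OF i] by (simp add: \<phi>_def)
  show "(A * transpose_mat A) *\<^sub>v \<phi> i = \<mu> i \<cdot>\<^sub>v \<phi> i"
    using A \<psi>[OF i] eigenvector_mult_transpose[OF A \<psi>[OF i] eig[OF i]]
    by (simp add: \<phi>_def mult_mat_vec smult_smult_assoc mult.commute)
  have "(A *\<^sub>v \<psi> i) \<bullet> (A *\<^sub>v \<psi> j) = \<mu> j * (\<psi> i \<bullet> \<psi> j)"
    using A \<psi>[OF i] \<psi>[OF j] by (simp add: mult_mat_vec_scalar_prod eig[OF j])
  then show "\<phi> i \<bullet> \<phi> j = (if i = j then 1 else 0)"
    using A pos[OF i] pos[OF j] \<psi>[OF i] \<psi>[OF j] by (simp add: \<phi>_def orth[OF i j])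
qed

lemma card_heavy_coordinates_le:
  fixes \<psi> :: "'i \<Rightarrow> real vec"
  assumes I: "finite I" and \<psi>: "\<And>i. i \<in> I \<Longrightarrow> \<psi> i \<in> carrier_vec m"
    and unit: "\<And>i. i \<in> I \<Longrightarrow> \<psi> i \<bullet> \<psi> i = 1"
  shows "real (card {u. u < m \<and> (\<Sum>i\<in>I. (\<psi> i $ u)\<^sup>2) > \<delta>}) * \<delta> \<le> real (card I)"
proof -
  define S where "S = {u. u < m \<and> (\<Sum>i\<in>I. (\<psi> i $ u)\<^sup>2) > \<delta>}"
  have "real (card S) * \<delta> = (\<Sum>u\<in>S. \<delta>)" by simp
  also have "\<dots> \<le> (\<Sum>u\<in>S. \<Sum>i\<in>I. (\<psi> i $ u)\<^sup>2)"
    by (rule sum_mono) (simp add: S_def less_imp_le)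
  also have "\<dots> \<le> (\<Sum>u<m. \<Sum>i\<in>I. (\<psi> i $ u)\<^sup>2)"
    by (rule sum_mono2) (auto simp: S_def intro: sum_nonneg)
  also have "\<dots> = (\<Sum>i\<in>I. \<Sum>u<m. (\<psi> i $ u)\<^sup>2)" by (rule sum.swap)
  also have "\<dots> = (\<Sum>i\<in>I. \<psi> i \<bullet> \<psi> i)"
    using \<psi> by (intro sum.cong) (auto simp: scalar_prod_def power2_eq_square lessThan_atLeast0 dest: carrier_vecD)
  also have "\<dots> = real (card I)" by (simp add: unit)
  finally show ?thesis unfolding S_def .
qed

lemma card_lessThan_filter_eq_sum_of_bool:
  fixes m :: nat
  shows "of_nat (card {u. u < m \<and> P u}) = (\<Sum>u<m. of_bool (P u) :: 'a :: semiring_1)"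
proof -
  have "{u. u < m \<and> P u} = {..<m} \<inter> {u. P u}" by auto
  then show ?thesis by simp
qed

lemma sum_card_rows_eq_sum_card_cols:
  fixes n m :: nat
  shows "(\<Sum>v<n. card {u. u < m \<and> R v u}) = (\<Sum>u<m. card {v. v < n \<and> R v u})"
proof -
  have "(\<Sum>v<n. card {u. u < m \<and> R v u}) = (\<Sum>v<n. \<Sum>u<m. of_bool (R v u) :: nat)"
    by (simp only: card_lessThan_filter_eq_sum_of_bool[where 'a = nat, symmetric] of_nat_id)
  also have "\<dots> = (\<Sum>u<m. \<Sum>v<n. of_bool (R v u))" by (rule sum.swap)
  also have "\<dots> = (\<Sum>u<m. card {v. v < n \<and> R v u})"
    by (simp only: card_lessThan_filter_eq_sum_of_bool[where 'a = nat, symmetric] of_nat_id)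
  finally show ?thesis .
qed

definition codegree :: "nat \<Rightarrow> (nat \<times> nat) set \<Rightarrow> nat \<Rightarrow> nat \<Rightarrow> nat" where
  "codegree m E v v' = card {u. u < m \<and> (v, u) \<in> E \<and> (v', u) \<in> E}"

lemma C4free_bireg_degree:
  assumes "C4free_bireg n m E d k"
  shows "v < n \<Longrightarrow> card {u. u < m \<and> (v, u) \<in> E} = d"
    and "u < m \<Longrightarrow> card {v. v < n \<and> (v, u) \<in> E} = k + 1"
  using assms unfolding C4free_bireg_def by blast+

lemma C4free_bireg_edge_count:
  assumes "C4free_bireg n m E d k"
  shows "n * d = m * (k + 1)"
proof -
  have "n * d = (\<Sum>v<n. card {u. u < m \<and> (v, u) \<in> E})"
    by (simp add: C4free_bireg_degree(1)[OF assms])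
  also have "\<dots> = (\<Sum>u<m. card {v. v < n \<and> (v, u) \<in> E})"
    by (rule sum_card_rows_eq_sum_card_cols)
  also have "\<dots> = m * (k + 1)"
    by (simp add: C4free_bireg_degree(2)[OF assms])
  finally show ?thesis .
qed

lemma C4free_bireg_codegree:
  assumes "C4free_bireg n m E d k" and "v < n" "v' < n"
  shows "codegree m E v v = d" and "v \<noteq> v' \<Longrightarrow> codegree m E v v' \<le> 1"
proof -
  have "{u. u < m \<and> (v, u) \<in> E \<and> (v, u) \<in> E} = {u. u < m \<and> (v, u) \<in> E}" by blast
  then show "codegree m E v v = d"
    using C4free_bireg_degree(1)[OF assms(1,2)] by (simp add: codegree_def)
  show "v \<noteq> v' \<Longrightarrow> codegree m E v v' \<le> 1"
    using assms unfolding C4free_bireg_def codegree_def by blast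
qed

lemma C4free_bireg_sum_codegree:
  assumes G: "C4free_bireg n m E d k" and v: "v < n"
  shows "(\<Sum>v'<n. codegree m E v v') = d * (k + 1)"
proof -
  have "(\<Sum>v'<n. codegree m E v v') = (\<Sum>u<m. card {v'. v' < n \<and> (v, u) \<in> E \<and> (v', u) \<in> E})"
    unfolding codegree_def by (rule sum_card_rows_eq_sum_card_cols)
  also have "\<dots> = (\<Sum>u<m. if (v, u) \<in> E then k + 1 else 0)"
  proof (rule sum.cong)
    fix u assume "u \<in> {..<m}"
    then have "card {v'. v' < n \<and> (v', u) \<in> E} = k + 1"
      using C4free_bireg_degree(2)[OF G] by simp
    then show "card {v'. v' < n \<and> (v, u) \<in> E \<and> (v', u) \<in> E} = (if (v, u) \<in> E then k + 1 else 0)"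
      by simp
  qed simp
  also have "\<dots> = card {u. u < m \<and> (v, u) \<in> E} * (k + 1)"
    by (simp add: sum.inter_filter[symmetric])
  also have "\<dots> = d * (k + 1)"
    by (simp add: C4free_bireg_degree(1)[OF G v])
  finally show ?thesis .
qed

lemma signed_adj_abs_entry:
  assumes "signed_adj n m E B" "v < n" "u < m"
  shows "\<bar>B $$ (v, u)\<bar> = of_bool ((v, u) \<in> E)"
proof -
  have "if (v, u) \<in> E then B $$ (v, u) \<in> {1, -1} else B $$ (v, u) = 0"
    using assms unfolding signed_adj_def by blast
  then show ?thesis by (cases "(v, u) \<in> E") auto
qed

lemma signed_adj_carrier: "signed_adj n m E B \<Longrightarrow> B \<in> carrier_mat n m"
  by (simp add: signed_adj_def)

lemma index_mult_transpose_mat: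
  assumes "B \<in> carrier_mat n m" "v < n" "v' < n"
  shows "(B * transpose_mat B) $$ (v, v') = (\<Sum>u<m. B $$ (v, u) * B $$ (v', u))"
  using assms by (simp add: scalar_prod_def lessThan_atLeast0)

lemma signed_adj_gram_diag:
  assumes B: "signed_adj n m E B" and v: "v < n"
  shows "(B * transpose_mat B) $$ (v, v) = codegree m E v v"
proof -
  have "(B * transpose_mat B) $$ (v, v) = (\<Sum>u<m. \<bar>B $$ (v, u)\<bar> * \<bar>B $$ (v, u)\<bar>)"
    using index_mult_transpose_mat[OF signed_adj_carrier[OF B] v v] by simp
  also have "\<dots> = (\<Sum>u<m. of_bool ((v, u) \<in> E))"
    using B v by (intro sum.cong) (simp_all add: signed_adj_abs_entry)
  finally show ?thesis
    by (simp add: codegree_def card_lessThan_filter_eq_sum_of_bool)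
qed

lemma signed_adj_abs_gram_le_codegree:
  assumes B: "signed_adj n m E B" and v: "v < n" and v': "v' < n"
  shows "\<bar>(B * transpose_mat B) $$ (v, v')\<bar> \<le> codegree m E v v'"
proof -
  have "\<bar>(B * transpose_mat B) $$ (v, v')\<bar> \<le> (\<Sum>u<m. \<bar>B $$ (v, u)\<bar> * \<bar>B $$ (v', u)\<bar>)"
    unfolding index_mult_transpose_mat[OF signed_adj_carrier[OF B] v v'] abs_mult[symmetric] by (rule sum_abs)
  also have "\<dots> = (\<Sum>u<m. of_bool ((v, u) \<in> E \<and> (v', u) \<in> E))"
    using B v v' by (intro sum.cong) (simp_all add: signed_adj_abs_entry)
  finally show ?thesis
    by (simp add: codegree_def card_lessThan_filter_eq_sum_of_bool)
qed

definition Lplus :: "nat \<Rightarrow> real mat \<Rightarrow> real mat" where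
  "Lplus d B = (1 / real d) \<cdot>\<^sub>m (B * transpose_mat B)"

lemma Lplus_minus_one_entry_sq_le:
  assumes G: "C4free_bireg n m E d k" and B: "signed_adj n m E B" and d: "d > 0"
    and v: "v < n" and v': "v' < n"
  shows "((Lplus d B - 1\<^sub>m n) $$ (v, v'))\<^sup>2 \<le> (if v = v' then 0 else codegree m E v v' / (real d)\<^sup>2)"
proof -
  define g where "g = (B * transpose_mat B) $$ (v, v')"
  have entry: "(Lplus d B - 1\<^sub>m n) $$ (v, v') = g / d - of_bool (v = v')"
    using signed_adj_carrier[OF B] v v' by (simp add: Lplus_def g_def)
  show ?thesis
  proof (cases "v = v'")
    case True
    then have "g = d"
      using signed_adj_gram_diag[OF B v] C4free_bireg_codegree(1)[OF G v v] by (simp add: g_def)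
    then show ?thesis
      unfolding entry using True d by simp
  next
    case False
    have g_le: "\<bar>g\<bar> \<le> codegree m E v v'" and le1: "real (codegree m E v v') \<le> 1"
      using signed_adj_abs_gram_le_codegree[OF B v v'] C4free_bireg_codegree(2)[OF G v v' False]
      by (simp_all add: g_def)
    have "g\<^sup>2 = \<bar>g\<bar> * \<bar>g\<bar>" by (simp add: power2_eq_square)
    also have "\<dots> \<le> \<bar>g\<bar>" using g_le le1 by (intro mult_right_le_one_le) auto
    also have "\<dots> \<le> codegree m E v v'" by (fact g_le)
    finally have "g\<^sup>2 \<le> codegree m E v v'" .
    then show ?thesis
      using False d by (simp add: entry power_divide divide_right_mono)
  qed
qed

lemma frobenius_Lplus_minus_one_le:
  assumes G: "C4free_bireg n m E d k" and B: "signed_adj n m E B" and d: "d > 0"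
  shows "(\<Sum>v<n. \<Sum>v'<n. ((Lplus d B - 1\<^sub>m n) $$ (v, v'))\<^sup>2) \<le> real m * real k * (real k + 1) / (real d)\<^sup>2"
proof -
  have row: "(\<Sum>v'<n. ((Lplus d B - 1\<^sub>m n) $$ (v, v'))\<^sup>2) \<le> real d * real k / (real d)\<^sup>2"
    if v: "v < n" for v
  proof -
    have "(\<Sum>v'<n. ((Lplus d B - 1\<^sub>m n) $$ (v, v'))\<^sup>2)
        \<le> (\<Sum>v'<n. if v = v' then 0 else codegree m E v v' / (real d)\<^sup>2)"
      using Lplus_minus_one_entry_sq_le[OF G B d v] by (intro sum_mono) simp
    also have "\<dots> = (\<Sum>v'<n. codegree m E v v' / (real d)\<^sup>2) - codegree m E v v / (real d)\<^sup>2"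
      using v by (simp add: sum.If_cases Diff_eq[symmetric] sum_diff1)
    also have "\<dots> = (real d * (real k + 1) - real d) / (real d)\<^sup>2"
      using C4free_bireg_sum_codegree[OF G v] C4free_bireg_codegree(1)[OF G v v]
      by (simp add: diff_divide_distrib add_divide_distrib algebra_simps flip: sum_divide_distrib of_nat_sum)
    also have "\<dots> = real d * real k / (real d)\<^sup>2"
      by (simp add: algebra_simps)
    finally show ?thesis .
  qed
  have "(\<Sum>v<n. \<Sum>v'<n. ((Lplus d B - 1\<^sub>m n) $$ (v, v'))\<^sup>2) \<le> real n * (real d * real k / (real d)\<^sup>2)"
    using sum_mono[of "{..<n}", OF row] by simp
  also have "\<dots> = real (n * d) * real k / (real d)\<^sup>2" by simp
  also have "\<dots> = real m * real k * (real k + 1) / (real d)\<^sup>2"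
    unfolding C4free_bireg_edge_count[OF G] by (simp add: algebra_simps)
  finally show ?thesis .
qed

lemma pos_eigen_system_gram:
  fixes B :: "real mat"
  assumes d: "d > 0" and B: "B \<in> carrier_mat n m"
    and eigsys: "pos_eigen_system m d B r lam psi" and i: "i < r"
  shows "psi i \<in> carrier_vec m" and "d * lam i > 0"
    and "(transpose_mat B * B) *\<^sub>v psi i = (d * lam i) \<cdot>\<^sub>v psi i"
proof -
  have psi: "psi i \<in> carrier_vec m" and "lam i > 0"
    and eig: "Lminus d B *\<^sub>v psi i = lam i \<cdot>\<^sub>v psi i"
    using eigsys i unfolding pos_eigen_system_def by auto
  then show "psi i \<in> carrier_vec m" "d * lam i > 0" using d by simp_all
  have "(transpose_mat B * B) *\<^sub>v psi i = real d \<cdot>\<^sub>v (Lminus d B *\<^sub>v psi i)"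
    using d B psi by (simp add: Lminus_def smult_mat_mult_mat_vec smult_smult_assoc)
  then show "(transpose_mat B * B) *\<^sub>v psi i = (d * lam i) \<cdot>\<^sub>v psi i"
    by (simp add: eig smult_smult_assoc)
qed

lemma sum_sq_eigenvalue_deviation_le_frobenius:
  fixes B :: "real mat"
  assumes d: "d > 0" and B: "B \<in> carrier_mat n m"
    and eigsys: "pos_eigen_system m d B r lam psi" and I: "I \<subseteq> {..<r}"
  shows "(\<Sum>i\<in>I. (lam i - 1)\<^sup>2) \<le> (\<Sum>v<n. \<Sum>v'<n. ((Lplus d B - 1\<^sub>m n) $$ (v, v'))\<^sup>2)"
proof -
  have psi: "psi i \<in> carrier_vec m" and pos: "d * lam i > 0"
    and eig: "(transpose_mat B * B) *\<^sub>v psi i = (d * lam i) \<cdot>\<^sub>v psi i" if "i \<in> I" for i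
    using pos_eigen_system_gram[OF d B eigsys] I that by auto
  have orth: "psi i \<bullet> psi j = (if i = j then 1 else 0)" if "i \<in> I" "j \<in> I" for i j
    using eigsys I that unfolding pos_eigen_system_def by (simp add: subset_eq)
  define \<phi> where "\<phi> = (\<lambda>i. (1 / sqrt (d * lam i)) \<cdot>\<^sub>v (B *\<^sub>v psi i))"
  have \<phi>: "\<And>i. i \<in> I \<Longrightarrow> \<phi> i \<in> carrier_vec n"
    "\<And>i. i \<in> I \<Longrightarrow> (B * transpose_mat B) *\<^sub>v \<phi> i = (d * lam i) \<cdot>\<^sub>v \<phi> i"
    "\<And>i j. i \<in> I \<Longrightarrow> j \<in> I \<Longrightarrow> \<phi> i \<bullet> \<phi> j = (if i = j then 1 else 0)"
    unfolding \<phi>_def by (rule orthonormal_eigenvectors_mult_transpose[OF B psi orth eig pos], assumption+)+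
  have eig_shifted: "(Lplus d B - 1\<^sub>m n) *\<^sub>v \<phi> i = (lam i - 1) \<cdot>\<^sub>v \<phi> i" if i: "i \<in> I" for i
  proof -
    have "(Lplus d B - 1\<^sub>m n) *\<^sub>v \<phi> i = (1 / real d) \<cdot>\<^sub>v ((B * transpose_mat B) *\<^sub>v \<phi> i) - \<phi> i"
      using B \<phi>(1)[OF i] unfolding Lplus_def
      by (subst minus_mult_distrib_mat_vec[of _ n n]) (auto simp: smult_mat_mult_mat_vec)
    also have "\<dots> = (lam i - 1) \<cdot>\<^sub>v \<phi> i"
      using d \<phi>(1)[OF i] by (intro eq_vecI) (auto simp: \<phi>(2)[OF i] algebra_simps)
    finally show ?thesis .
  qed
  have "Lplus d B - 1\<^sub>m n \<in> carrier_mat n n" by (rule minus_carrier_mat[OF one_carrier_mat])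
  moreover have "finite I" using I finite_subset by blast
  ultimately show ?thesis
    by (rule sum_sq_eigenvalues_le_frobenius[where \<phi> = \<phi>]) (simp_all add: \<phi>(1,3) eig_shifted)
qed

lemma sum_sq_eigenvalue_deviation_le:
  assumes "d > 0" and "C4free_bireg n m E d k" and "signed_adj n m E B"
    and "pos_eigen_system m d B r lam psi" and "I \<subseteq> {..<r}"
  shows "(\<Sum>i\<in>I. (lam i - 1)\<^sup>2) \<le> real m * real k * (real k + 1) / (real d)\<^sup>2"
  using sum_sq_eigenvalue_deviation_le_frobenius[OF assms(1) signed_adj_carrier[OF assms(3)] assms(4,5)]
    frobenius_Lplus_minus_one_le[OF assms(2,3,1)]
  by (rule order_trans)

theorem claim2p4:
  fixes n m d k :: nat and E :: "(nat \<times> nat) set" and B :: "real mat"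
    and lam :: "nat \<Rightarrow> real" and psi :: "nat \<Rightarrow> real vec" and \<epsilon> \<delta> :: real
  assumes "k \<ge> 1" and "d > 0"
    and "C4free_bireg n m E d k"
    and "signed_adj n m E B"
    and "pos_eigen_system m d B (vec_space.rank n B) lam psi"
    and "\<epsilon> > 0" and "\<delta> > 0"
  shows "real (card (structured_set m (vec_space.rank n B) lam psi \<epsilon> \<delta>))
           \<le> real m * real k * (real k + 1) / ((real d)^2 * \<epsilon> * \<delta>)"
proof -
  define r where "r = vec_space.rank n B"
  define I where "I = {i. i < r \<and> (lam i - 1)\<^sup>2 > \<epsilon>}"
  define S where "S = structured_set m r lam psi \<epsilon> \<delta>"
  define K where "K = real m * real k * (real k + 1) / (real d)\<^sup>2"
  have "real (card I) * \<epsilon> = (\<Sum>i\<in>I. \<epsilon>)" by simp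
  also have "\<dots> \<le> (\<Sum>i\<in>I. (lam i - 1)\<^sup>2)" by (rule sum_mono) (simp add: I_def)
  also have "\<dots> \<le> K"
    unfolding K_def using assms(2-5) by (rule sum_sq_eigenvalue_deviation_le) (auto simp: I_def r_def)
  finally have card_I: "real (card I) * \<epsilon> \<le> K" .
  have "S = {u. u < m \<and> (\<Sum>i\<in>I. (psi i $ u)\<^sup>2) > \<delta>}"
    unfolding S_def structured_set_def I_def ..
  moreover have "finite I" "\<And>i. i \<in> I \<Longrightarrow> psi i \<in> carrier_vec m \<and> psi i \<bullet> psi i = 1"
    using assms(5) unfolding pos_eigen_system_def I_def r_def by auto
  ultimately have "real (card S) * \<delta> \<le> real (card I)"
    using card_heavy_coordinates_le[of I psi m \<delta>] by simp
  then have "real (card S) * \<delta> * \<epsilon> \<le> K"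
    using card_I assms(6) by (meson mult_right_mono less_imp_le order_trans)
  then have "real (card S) \<le> K / (\<epsilon> * \<delta>)"
    using assms(6,7) by (simp add: pos_le_divide_eq mult_ac)
  then show ?thesis unfolding S_def r_def K_def by (simp add: divide_divide_eq_left mult_ac)
qed

end
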